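(* Let $N$ be a Poisson process on $[0,\infty)$ with intensity $\lambda>0$, with points $0<X_1<X_2<\cdots$, and let $\epsilon>0$, $L>0$. For every integer $n\ge0$, $$\Pr(\beta_0(L)=n)=\frac{1}{n!}\sum_{i=0}^{\lfloor L/\epsilon\rfloor-n}\frac{(-1)^i}{i!}\Big(\big(L-(n+i)\epsilon\big)\lambda e^{-\lambda\epsilon}\Big)^{n+i},$$ where an empty sum is $0$.
   Context: A cluster is a maximal set of consecutive points $X_j,\dots,X_k$ with $X_{l+1}-X_l\le\epsilon$ for $j\le l<k$; its end is $X_k+\epsilon$. $\beta_0(L)$ is the number of clusters whose end is $\le L$ (number of complete clusters, i.e. connected components, in $[0,L]$). *)

theory Defs
  imports "HOL-Probability.Probability"
begin

text \<open>Points of the process are given as a sequence X :: nat => real, where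
  X 0 is the first point X_1 of the paper, X 1 the second point, etc.
  Poisson process on [0,inf) of intensity lam: points are partial sums of
  i.i.d. Exp(lam) interarrival times T 0, T 1, ...\<close>

definition poisson_points :: "(nat \<Rightarrow> 'a \<Rightarrow> real) \<Rightarrow> 'a \<Rightarrow> nat \<Rightarrow> real" where
  "poisson_points T \<omega> k = (\<Sum>i\<le>k. T i \<omega>)"

definition is_cluster :: "real \<Rightarrow> (nat \<Rightarrow> real) \<Rightarrow> nat \<Rightarrow> nat \<Rightarrow> bool" where
  "is_cluster eps X j k \<longleftrightarrow> j \<le> k
     \<and> (\<forall>l. j \<le> l \<and> l < k \<longrightarrow> X (Suc l) - X l \<le> eps)
     \<and> (j = 0 \<or> X j - X (j - 1) > eps)
     \<and> X (Suc k) - X k > eps"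

text \<open>The end of cluster (j,k) is X k + eps; beta0 counts clusters whose end is <= L.\<close>
definition beta0 :: "real \<Rightarrow> (nat \<Rightarrow> real) \<Rightarrow> real \<Rightarrow> nat" where
  "beta0 eps X L = card {(j, k). is_cluster eps X j k \<and> X k + eps \<le> L}"

end

theory Submission
  imports Defs
begin

(* A complete cluster is determined by its last point, so beta0(L) is the number N of points X_k
   with X_k + eps <= L whose following gap exceeds eps. The binomial moment E[N choose m] is a sum,
   over candidate last ends k and sets J of m - 1 earlier ones, of the probability that all of them
   are cluster ends. By memorylessness each prescribed gap > eps costs a factor exp(-lam eps), and
   every such gap before X_k pushes the Erlang distributed X_k forward by eps; summing the
   resulting Erlang distribution functions over k gives
     E[N choose m] = ((L - m eps)_+ lam exp(-lam eps))^m / m!.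
   This vanishes for m > L / eps, so N <= floor(L / eps) almost surely, and binomial inversion of
   these finitely many moments gives the distribution of N. *)

section \<open>Clusters and their last points\<close>

lemma is_cluster_start_unique:
  assumes "is_cluster eps X j k" and "is_cluster eps X j' k"
  shows "j = j'"
proof -
  have False if "is_cluster eps X i k" "is_cluster eps X i' k" "i < i'" for i i'
  proof -
    have "i \<le> i' - 1" "i' - 1 < k" "Suc (i' - 1) = i'"
      using that(2,3) unfolding is_cluster_def by auto
    then have "X i' - X (i' - 1) \<le> eps"
      using that(1) unfolding is_cluster_def by metis
    moreover have "X i' - X (i' - 1) > eps"
      using that(2,3) unfolding is_cluster_def by auto
    ultimately show False
      by simp
  qed
  then show ?thesis
    using assms by (metis linorder_neqE_nat)
qed

lemma is_cluster_ending_at: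
  assumes "X (Suc k) - X k > eps"
  shows "\<exists>j. is_cluster eps X j k"
proof -
  define starts where "starts = {j. j \<le> k \<and> (j = 0 \<or> X j - X (j - 1) > eps)}"
  define j where "j = Max starts"
  have "finite starts" "0 \<in> starts"
    unfolding starts_def by auto
  then have j: "j \<in> starts" and j_max: "\<And>i. i \<in> starts \<Longrightarrow> i \<le> j"
    unfolding j_def using Max_in Max_ge by auto
  have "X (Suc l) - X l \<le> eps" if "j \<le> l" "l < k" for l
  proof (rule ccontr)
    assume "\<not> ?thesis"
    then have "Suc l \<in> starts"
      using that unfolding starts_def by auto
    then show False
      using j_max that by fastforce
  qed
  then have "is_cluster eps X j k"
    using j assms unfolding is_cluster_def starts_def by auto
  then show ?thesis ..
qed

lemma beta0_eq_card_cluster_ends: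
  "beta0 eps X L = card {k. X (Suc k) - X k > eps \<and> X k + eps \<le> L}"
  unfolding beta0_def
proof (rule bij_betw_same_card[of snd], rule bij_betwI')
  fix c c' assume "c \<in> {(j, k). is_cluster eps X j k \<and> X k + eps \<le> L}"
    and "c' \<in> {(j, k). is_cluster eps X j k \<and> X k + eps \<le> L}"
  then show "(snd c = snd c') = (c = c')"
    using is_cluster_start_unique by (cases c; cases c') auto
next
  fix c assume "c \<in> {(j, k). is_cluster eps X j k \<and> X k + eps \<le> L}"
  then show "snd c \<in> {k. X (Suc k) - X k > eps \<and> X k + eps \<le> L}"
    unfolding is_cluster_def by auto
next
  fix k assume "k \<in> {k. X (Suc k) - X k > eps \<and> X k + eps \<le> L}"
  then show "\<exists>c\<in>{(j, k). is_cluster eps X j k \<and> X k + eps \<le> L}. k = snd c"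
    using is_cluster_ending_at by fastforce
qed

lemma bij_betw_card_Int_lessThan:
  assumes "finite (C :: nat set)"
  shows "bij_betw (\<lambda>k. card (C \<inter> {..<k})) C {..<card C}"
proof -
  have "inj_on (\<lambda>k. card (C \<inter> {..<k})) C"
  proof (rule linorder_inj_onI)
    fix k k' assume "k < k'" "k \<in> C"
    then have "C \<inter> {..<k} \<subset> C \<inter> {..<k'}"
      by auto
    then show "card (C \<inter> {..<k}) \<noteq> card (C \<inter> {..<k'})"
      by (metis assms finite_Int psubset_card_mono less_irrefl)
  qed auto
  moreover have "card (C \<inter> {..<k}) < card C" if "k \<in> C" for k
    using that assms by (intro psubset_card_mono) auto
  ultimately show ?thesis
    unfolding bij_betw_def by (intro conjI card_subset_eq) (auto simp: card_image)
qed

lemma sum_card_Int_lessThan_choose: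
  assumes "finite (C :: nat set)"
  shows "(\<Sum>k\<in>C. card (C \<inter> {..<k}) choose r) = card C choose Suc r"
proof -
  have "(\<Sum>k\<in>C. card (C \<inter> {..<k}) choose r) = (\<Sum>i<card C. i choose r)"
    using sum.reindex_bij_betw[OF bij_betw_card_Int_lessThan[OF assms]] .
  also have "\<dots> = card C choose Suc r"
    by (cases "card C") (simp_all add: lessThan_Suc_atMost sum_choose_upper)
  finally show ?thesis .
qed

lemma suminf_indicator_mult_card_Int_lessThan_choose:
  assumes "finite (C :: nat set)"
  shows "(\<Sum>k. indicator C k * of_nat (card (C \<inter> {..<k}) choose r) :: ennreal) = of_nat (card C choose Suc r)"
proof -
  have "(\<Sum>k. indicator C k * of_nat (card (C \<inter> {..<k}) choose r) :: ennreal)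
      = (\<Sum>k\<in>C. of_nat (card (C \<inter> {..<k}) choose r))"
    using assms by (subst suminf_finite[OF assms]) auto
  also have "\<dots> = of_nat (card C choose Suc r)"
    using sum_card_Int_lessThan_choose[OF assms] by (simp flip: of_nat_sum)
  finally show ?thesis .
qed

lemma suminf_indicator_eq_emeasure_count_space:
  "(\<Sum>k. indicator C k :: ennreal) = emeasure (count_space UNIV) (C :: nat set)"
  by (simp flip: nn_integral_count_space_nat)

lemma prod_of_bool:
  "finite A \<Longrightarrow> (\<Prod>x\<in>A. of_bool (P x)) = (of_bool (\<forall>x\<in>A. P x) :: 'a :: comm_semiring_1)"
  by (induction A rule: finite_induct) auto

lemma sum_fun_upd_add:
  assumes "finite B"
  shows "(\<Sum>j\<in>B. (x(i := x i + d)) j) = (\<Sum>j\<in>B. x j) + (if i \<in> B then d else 0)"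
proof (cases "i \<in> B")
  case True
  have "(\<Sum>j\<in>B - {i}. (x(i := x i + d)) j) = (\<Sum>j\<in>B - {i}. x j)"
    by (intro sum.cong) auto
  then show ?thesis
    using True sum.remove[OF assms True, of x] sum.remove[OF assms True, of "x(i := x i + d)"]
    by (simp add: algebra_simps)
next
  case False
  then have "(\<Sum>j\<in>B. (x(i := x i + d)) j) = (\<Sum>j\<in>B. x j)"
    by (intro sum.cong) auto
  with False show ?thesis
    by simp
qed

lemma mult_le_iff_le_nat_floor_divide:
  fixes eps L :: real
  assumes "eps > 0" "L \<ge> 0"
  shows "real m * eps \<le> L \<longleftrightarrow> m \<le> nat \<lfloor>L / eps\<rfloor>"
  using assms by (smt (verit, del_insts) divide_nonneg_nonneg le_nat_floor of_nat_floor
    of_nat_mono pos_le_divide_eq)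

lemma binomial_inversion:
  fixes k n B :: nat
  assumes "k \<le> B"
  shows "(\<Sum>i | n + i \<le> B. (-1) ^ i * real ((n + i) choose n) * real (k choose (n + i)))
    = of_bool (k = n)"
proof (cases "n \<le> k")
  case False
  then show ?thesis
    by (auto intro!: sum.neutral)
next
  case True
  have "(\<Sum>i | n + i \<le> B. (-1) ^ i * real ((n + i) choose n) * real (k choose (n + i)))
      = (\<Sum>i\<le>k - n. (-1) ^ i * real ((n + i) choose n) * real (k choose (n + i)))"
    using assms True by (intro sum.mono_neutral_right) (auto intro: finite_subset[of _ "{..B}"])
  also have "\<dots> = real (k choose n) * (\<Sum>i\<le>k - n. (-1) ^ i * real ((k - n) choose i))"
    unfolding sum_distrib_left
  proof (intro sum.cong refl)
    fix i assume "i \<in> {..k - n}"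
    then have "(k choose (n + i)) * ((n + i) choose n) = (k choose n) * ((k - n) choose i)"
      using choose_mult[of n "n + i" k] True by auto
    then have "real (k choose (n + i)) * real ((n + i) choose n) = real (k choose n) * real ((k - n) choose i)"
      by (metis of_nat_mult)
    then show "(-1) ^ i * real ((n + i) choose n) * real (k choose (n + i))
      = real (k choose n) * ((-1) ^ i * real ((k - n) choose i))"
      by (simp add: algebra_simps)
  qed
  also have "\<dots> = of_bool (k = n)"
    using choose_alternating_sum[of "k - n"] True by auto
  finally show ?thesis .
qed

section \<open>Erlang distributions and memorylessness\<close>

lemma sums_choose_power_div_fact:
  fixes y :: real
  shows "(\<lambda>k. real (k choose r) * y ^ k / fact k) sums (y ^ r / fact r * exp y)"
proof -
  have "(\<lambda>j. y ^ r / fact r * (y ^ j /\<^sub>R fact j)) sums (y ^ r / fact r * exp y)"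
    by (intro sums_mult exp_converges)
  moreover have "y ^ r / fact r * (y ^ j /\<^sub>R fact j) = real ((j + r) choose r) * y ^ (j + r) / fact (j + r)" for j
    by (simp add: binomial_fact power_add field_simps)
  ultimately show ?thesis
    by (subst sums_zero_iff_shift[where n=r, symmetric]) auto
qed

lemma sums_choose_erlang_density:
  fixes lam x :: real
  assumes "x \<ge> 0"
  shows "(\<lambda>k. real (k choose r) * erlang_density k lam x) sums (lam ^ Suc r * x ^ r / fact r)"
proof -
  have "(\<lambda>k. real (k choose r) * (lam * x) ^ k / fact k * (lam * exp (- lam * x)))
      sums ((lam * x) ^ r / fact r * exp (lam * x) * (lam * exp (- lam * x)))"
    by (intro sums_mult2 sums_choose_power_div_fact)
  moreover have "(\<lambda>k. real (k choose r) * (lam * x) ^ k / fact k * (lam * exp (- lam * x)))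
      = (\<lambda>k. real (k choose r) * erlang_density k lam x)"
    using assms by (simp add: fun_eq_iff erlang_density_def power_mult_distrib field_simps)
  moreover have "(lam * x) ^ r / fact r * exp (lam * x) * (lam * exp (- lam * x)) = lam ^ Suc r * x ^ r / fact r"
    by (simp add: power_mult_distrib mult_ac flip: exp_add)
  ultimately show ?thesis
    by (simp only:)
qed

lemma nn_integral_power_Icc:
  fixes lam c :: real
  assumes "lam \<ge> 0" "c \<ge> 0"
  shows "(\<integral>\<^sup>+x. ennreal (lam ^ Suc r * x ^ r / fact r) * indicator {0..c} x \<partial>lborel)
    = ennreal ((lam * c) ^ Suc r / fact (Suc r))"
proof -
  have "((\<lambda>x. lam ^ Suc r * x ^ Suc r / fact (Suc r)) has_real_derivative lam ^ Suc r * x ^ r / fact r) (at x)"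
    for x :: real
  proof -
    have "lam ^ Suc r * (real (Suc r) * x ^ r) / fact (Suc r) = lam ^ Suc r * x ^ r / fact r"
      by (simp add: fact_Suc del: of_nat_Suc)
    moreover have "((\<lambda>x. lam ^ Suc r * x ^ Suc r / fact (Suc r))
        has_real_derivative lam ^ Suc r * (real (Suc r) * x ^ r) / fact (Suc r)) (at x)"
      by (intro DERIV_cdivide DERIV_cmult) (use DERIV_pow[of "Suc r" x] in simp)
    ultimately show ?thesis
      by (simp only:)
  qed
  then have "(\<integral>\<^sup>+x. ennreal (lam ^ Suc r * x ^ r / fact r) * indicator {0..c} x \<partial>lborel)
    = lam ^ Suc r * c ^ Suc r / fact (Suc r) - lam ^ Suc r * 0 ^ Suc r / fact (Suc r)"
    using assms by (intro nn_integral_FTC_Icc) auto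
  then show ?thesis
    by (simp add: power_mult_distrib mult_ac)
qed

lemma suminf_choose_erlang_CDF:
  fixes lam c :: real
  assumes lam: "lam > 0"
  shows "(\<Sum>k. of_nat (k choose r) * ennreal (erlang_CDF k lam c))
    = ennreal (if c \<ge> 0 then (lam * c) ^ Suc r / fact (Suc r) else 0)"
proof -
  have "(\<Sum>k. of_nat (k choose r) * ennreal (erlang_CDF k lam c))
      = (\<Sum>k. \<integral>\<^sup>+x. of_nat (k choose r) * (ennreal (erlang_density k lam x) * indicator {..c} x) \<partial>lborel)"
    by (subst nn_integral_cmult) (auto simp: nn_integral_erlang_density[OF lam])
  also have "\<dots> = (\<integral>\<^sup>+x. (\<Sum>k. of_nat (k choose r) * (ennreal (erlang_density k lam x) * indicator {..c} x)) \<partial>lborel)"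
    by (rule nn_integral_suminf[symmetric]) auto
  also have "\<dots> = (\<integral>\<^sup>+x. ennreal (lam ^ Suc r * x ^ r / fact r) * indicator {0..c} x \<partial>lborel)"
  proof (rule nn_integral_cong)
    fix x :: real
    show "(\<Sum>k. of_nat (k choose r) * (ennreal (erlang_density k lam x) * indicator {..c} x))
      = ennreal (lam ^ Suc r * x ^ r / fact r) * indicator {0..c} x"
    proof (cases "0 \<le> x \<and> x \<le> c")
      case True
      have "(\<Sum>k. of_nat (k choose r) * (ennreal (erlang_density k lam x) * indicator {..c} x))
          = (\<Sum>k. ennreal (real (k choose r) * erlang_density k lam x))"
        using True lam by (simp add: ennreal_mult' ennreal_of_nat_eq_real_of_nat)
      also have "\<dots> = ennreal (lam ^ Suc r * x ^ r / fact r)"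
        using True lam sums_choose_erlang_density[of x r lam] by (intro suminf_ennreal_eq) auto
      finally show ?thesis
        using True by simp
    qed (auto simp: erlang_density_def)
  qed
  also have "\<dots> = ennreal (if c \<ge> 0 then (lam * c) ^ Suc r / fact (Suc r) else 0)"
    using lam nn_integral_power_Icc[of lam c r] by auto
  finally show ?thesis .
qed

abbreviation exponential_measure :: "real \<Rightarrow> real measure" where
  "exponential_measure lam \<equiv> density lborel (exponential_density lam)"

lemma nn_integral_exponential_tail:
  fixes lam eps :: real and g :: "real \<Rightarrow> ennreal"
  assumes lam: "lam > 0" and eps: "eps \<ge> 0" and g[measurable]: "g \<in> borel_measurable borel"
  shows "(\<integral>\<^sup>+y. indicator {eps<..} y * g y \<partial>exponential_measure lam)
    = ennreal (exp (- lam * eps)) * (\<integral>\<^sup>+y. g (y + eps) \<partial>exponential_measure lam)"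
proof -
  have "(\<integral>\<^sup>+y. indicator {eps<..} y * g y \<partial>exponential_measure lam)
      = (\<integral>\<^sup>+y. ennreal (exponential_density lam y) * (indicator {eps<..} y * g y) \<partial>lborel)"
    by (simp add: nn_integral_density lam)
  also have "\<dots> = (\<integral>\<^sup>+t. ennreal (exponential_density lam (eps + 1 * t))
      * (indicator {eps<..} (eps + 1 * t) * g (eps + 1 * t)) \<partial>lborel)"
    by (subst nn_integral_real_affine[where c=1 and t=eps]) auto
  also have "\<dots> = (\<integral>\<^sup>+t. ennreal (exp (- lam * eps)) * (ennreal (exponential_density lam t) * g (t + eps)) \<partial>lborel)"
  proof (rule nn_integral_cong_AE)
    show "AE t in lborel. ennreal (exponential_density lam (eps + 1 * t))
        * (indicator {eps<..} (eps + 1 * t) * g (eps + 1 * t))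
      = ennreal (exp (- lam * eps)) * (ennreal (exponential_density lam t) * g (t + eps))"
      using AE_lborel_singleton[of 0]
    proof eventually_elim
      case (elim t)
      show ?case
      proof (cases "t > 0")
        case True
        have "exponential_density lam (eps + t) = exp (- lam * eps) * exponential_density lam t"
          using True eps by (simp add: exponential_density_def exp_add[symmetric] algebra_simps)
        then show ?thesis
          using True by (simp add: ennreal_mult' mult.assoc add.commute)
      qed (use elim in \<open>auto simp: exponential_density_def\<close>)
    qed
  qed
  also have "\<dots> = ennreal (exp (- lam * eps)) * (\<integral>\<^sup>+y. g (y + eps) \<partial>exponential_measure lam)"
    by (simp add: nn_integral_cmult nn_integral_density lam)
  finally show ?thesis .
qed

lemma measurable_component_exponential:
  "j \<in> A \<Longrightarrow> (\<lambda>x. x j) \<in> borel_measurable (PiM A (\<lambda>_. exponential_measure lam))"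
  using measurable_component_singleton[of j A "\<lambda>_. exponential_measure lam"]
  by (simp cong: measurable_cong_sets)

lemma measurable_fun_upd_add_exponential:
  assumes "i \<in> A"
  shows "(\<lambda>x. x(i := x i + eps))
    \<in> measurable (PiM A (\<lambda>_. exponential_measure lam)) (PiM A (\<lambda>_. exponential_measure lam))"
proof (rule measurable_PiM_single')
  have sets_eq: "measurable (PiM A (\<lambda>_. exponential_measure lam)) (exponential_measure lam)
      = borel_measurable (PiM A (\<lambda>_. exponential_measure lam))"
    by (rule measurable_cong_sets) simp_all
  fix j assume "j \<in> A"
  note [measurable] = measurable_component_exponential[OF \<open>j \<in> A\<close>] measurable_component_exponential[OF assms]
  have "(\<lambda>x. (x(i := x i + eps)) j) \<in> borel_measurable (PiM A (\<lambda>_. exponential_measure lam))"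
    by (cases "j = i") simp_all
  then show "(\<lambda>x. (x(i := x i + eps)) j)
      \<in> measurable (PiM A (\<lambda>_. exponential_measure lam)) (exponential_measure lam)"
    unfolding sets_eq .
next
  have "x(i := x i + eps) \<in> (\<Pi>\<^sub>E j\<in>A. UNIV)" if "x \<in> (\<Pi>\<^sub>E j\<in>A. UNIV)" for x :: "'a \<Rightarrow> real"
    using PiE_fun_upd[OF UNIV_I that, of i] insert_absorb[OF assms] by simp
  then show "(\<lambda>x j. (x(i := x i + eps)) j) \<in> space (PiM A (\<lambda>_. exponential_measure lam))
      \<rightarrow> (\<Pi>\<^sub>E j\<in>A. space (exponential_measure lam))"
    by (simp add: space_PiM Pi_iff fun_upd_def)
qed

lemma measurable_prod_indicator_sum_exponential:
  fixes h :: "real \<Rightarrow> ennreal"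
  assumes "I \<subseteq> A" "B \<subseteq> A" and h[measurable]: "h \<in> borel_measurable borel"
  shows "(\<lambda>x. (\<Prod>j\<in>I. indicator {eps<..} (x j)) * h ((\<Sum>j\<in>B. x j) + c))
    \<in> borel_measurable (PiM A (\<lambda>_. exponential_measure lam))"
proof -
  have "(\<lambda>x. \<Prod>j\<in>I. indicator {eps<..} (x j) :: ennreal)
      \<in> borel_measurable (PiM A (\<lambda>_. exponential_measure lam))"
    using assms(1) by (intro borel_measurable_prod_ennreal
        measurable_compose[OF measurable_component_exponential borel_measurable_indicator]) auto
  moreover have "(\<lambda>x. \<Sum>j\<in>B. x j) \<in> borel_measurable (PiM A (\<lambda>_. exponential_measure lam))"
    using assms(2) by (intro borel_measurable_sum measurable_component_exponential) auto
  then have "(\<lambda>x. h ((\<Sum>j\<in>B. x j) + c)) \<in> borel_measurable (PiM A (\<lambda>_. exponential_measure lam))"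
    by (intro measurable_compose[OF _ h] borel_measurable_add) simp_all
  ultimately show ?thesis
    by (rule borel_measurable_times_ennreal)
qed

lemma nn_integral_PiM_exponential_tail:
  fixes lam eps :: real and G :: "('i \<Rightarrow> real) \<Rightarrow> ennreal"
  assumes lam: "lam > 0" and eps: "eps \<ge> 0" and A: "finite A" "i \<in> A"
    and G[measurable]: "G \<in> borel_measurable (PiM A (\<lambda>_. exponential_measure lam))"
  shows "(\<integral>\<^sup>+x. indicator {eps<..} (x i) * G x \<partial>PiM A (\<lambda>_. exponential_measure lam))
    = ennreal (exp (- lam * eps)) * (\<integral>\<^sup>+x. G (x(i := x i + eps)) \<partial>PiM A (\<lambda>_. exponential_measure lam))"
proof -
  interpret product_sigma_finite "\<lambda>_::'i. exponential_measure lam"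
    unfolding product_sigma_finite_def
    using prob_space_exponential_density[OF lam] prob_space_imp_sigma_finite by blast
  let ?P = "\<lambda>A. PiM A (\<lambda>_::'i. exponential_measure lam)"
  let ?e = "ennreal (exp (- lam * eps))"
  define A' where "A' = A - {i}"
  have A': "A = insert i A'" "i \<notin> A'" "finite A'"
    using A unfolding A'_def by auto
  have [measurable]: "(\<lambda>x. x i) \<in> borel_measurable (?P A)"
    using A(2) by (rule measurable_component_exponential)
  have G_shift[measurable]: "(\<lambda>x. G (x(i := x i + eps))) \<in> borel_measurable (?P A)"
    using measurable_comp[OF measurable_fun_upd_add_exponential[OF A(2)] G] by (simp add: comp_def)
  have ind_G: "(\<lambda>x. indicator {eps<..} (x i) * G x) \<in> borel_measurable (?P (insert i A'))"
    unfolding A'(1)[symmetric] by measurable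
  have e_G_shift: "(\<lambda>x. ?e * G (x(i := x i + eps))) \<in> borel_measurable (?P (insert i A'))"
    unfolding A'(1)[symmetric] by measurable
  have G_section: "(\<lambda>y. G (x(i := y))) \<in> borel_measurable borel" if "x \<in> space (?P A')" for x
    using measurable_comp[OF measurable_component_update[OF that A'(2)], of G] G A'(1)
    by (simp add: comp_def cong: measurable_cong_sets)
  have "(\<integral>\<^sup>+x. indicator {eps<..} (x i) * G x \<partial>?P A)
      = (\<integral>\<^sup>+x. \<integral>\<^sup>+y. indicator {eps<..} y * G (x(i := y)) \<partial>exponential_measure lam \<partial>?P A')"
    unfolding A'(1) using product_nn_integral_insert[OF A'(3,2) ind_G] by simp
  also have "\<dots> = (\<integral>\<^sup>+x. \<integral>\<^sup>+y. ?e * G (x(i := y + eps)) \<partial>exponential_measure lam \<partial>?P A')"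
  proof (rule nn_integral_cong)
    fix x assume x: "x \<in> space (?P A')"
    have "(\<lambda>y. G (x(i := y + eps))) \<in> borel_measurable (exponential_measure lam)"
      using measurable_comp[OF _ G_section[OF x], of "\<lambda>y. y + eps"] by (simp add: comp_def)
    then show "(\<integral>\<^sup>+y. indicator {eps<..} y * G (x(i := y)) \<partial>exponential_measure lam)
        = (\<integral>\<^sup>+y. ?e * G (x(i := y + eps)) \<partial>exponential_measure lam)"
      by (simp only: nn_integral_exponential_tail[OF lam eps G_section[OF x]] nn_integral_cmult)
  qed
  also have "\<dots> = (\<integral>\<^sup>+x. ?e * G (x(i := x i + eps)) \<partial>?P A)"
    unfolding A'(1) using product_nn_integral_insert[OF A'(3,2) e_G_shift] by simp
  also have "\<dots> = ?e * (\<integral>\<^sup>+x. G (x(i := x i + eps)) \<partial>?P A)"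
    using G_shift by (rule nn_integral_cmult)
  finally show ?thesis .
qed

lemma nn_integral_PiM_exponential_tails:
  fixes lam eps :: real and h :: "real \<Rightarrow> ennreal"
  assumes lam: "lam > 0" and eps: "eps \<ge> 0" and A: "finite A" and "I \<subseteq> A" "B \<subseteq> A"
    and h[measurable]: "h \<in> borel_measurable borel"
  shows "(\<integral>\<^sup>+x. (\<Prod>j\<in>I. indicator {eps<..} (x j)) * h ((\<Sum>j\<in>B. x j) + c)
      \<partial>PiM A (\<lambda>_. exponential_measure lam))
    = ennreal (exp (- lam * eps)) ^ card I
      * (\<integral>\<^sup>+x. h ((\<Sum>j\<in>B. x j) + c + eps * card (I \<inter> B)) \<partial>PiM A (\<lambda>_. exponential_measure lam))"
  using finite_subset[OF \<open>I \<subseteq> A\<close> A] \<open>I \<subseteq> A\<close>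
proof (induction I arbitrary: c rule: finite_induct)
  case (insert i I)
  let ?P = "PiM A (\<lambda>_. exponential_measure lam)"
  let ?e = "ennreal (exp (- lam * eps))"
  define d where "d = (if i \<in> B then eps else 0)"
  have B: "finite B" "\<And>j. j \<in> B \<Longrightarrow> j \<in> A"
    using A \<open>B \<subseteq> A\<close> finite_subset by auto
  have I: "i \<in> A" "\<And>j. j \<in> I \<Longrightarrow> j \<in> A"
    using insert.prems by auto
  have d_card: "d + eps * card (I \<inter> B) = eps * card (insert i I \<inter> B)"
    using insert.hyps B by (simp add: d_def Int_insert_left distrib_left)
  have "(\<integral>\<^sup>+x. (\<Prod>j\<in>insert i I. indicator {eps<..} (x j)) * h ((\<Sum>j\<in>B. x j) + c) \<partial>?P)
      = (\<integral>\<^sup>+x. indicator {eps<..} (x i) * ((\<Prod>j\<in>I. indicator {eps<..} (x j)) * h ((\<Sum>j\<in>B. x j) + c)) \<partial>?P)"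
    using insert.hyps by (simp add: mult.assoc)
  also have "\<dots> = ?e * (\<integral>\<^sup>+x. (\<Prod>j\<in>I. indicator {eps<..} (x j)) * h ((\<Sum>j\<in>B. x j) + (c + d)) \<partial>?P)"
  proof -
    have shift: "(\<Prod>j\<in>I. indicator {eps<..} ((x(i := x i + eps)) j)) * h ((\<Sum>j\<in>B. (x(i := x i + eps)) j) + c)
        = (\<Prod>j\<in>I. indicator {eps<..} (x j)) * h ((\<Sum>j\<in>B. x j) + (c + d))" for x :: "'a \<Rightarrow> real"
    proof -
      have "(\<Prod>j\<in>I. indicator {eps<..} ((x(i := x i + eps)) j) :: ennreal) = (\<Prod>j\<in>I. indicator {eps<..} (x j))"
        using insert.hyps(2) by (intro prod.cong) auto
      then show ?thesis
        using sum_fun_upd_add[OF B(1), of x i eps] by (simp add: d_def ac_simps)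
    qed
    have "(\<lambda>x. (\<Prod>j\<in>I. indicator {eps<..} (x j)) * h ((\<Sum>j\<in>B. x j) + c)) \<in> borel_measurable ?P"
      using insert.prems \<open>B \<subseteq> A\<close> by (intro measurable_prod_indicator_sum_exponential h) auto
    then show ?thesis
      by (simp only: nn_integral_PiM_exponential_tail[OF lam eps A I(1)] shift)
  qed
  also have "\<dots> = ?e * ?e ^ card I * (\<integral>\<^sup>+x. h ((\<Sum>j\<in>B. x j) + (c + d) + eps * card (I \<inter> B)) \<partial>?P)"
    using insert.IH insert.prems by (simp add: mult.assoc)
  also have "(\<lambda>x. (\<Sum>j\<in>B. x j) + (c + d) + eps * card (I \<inter> B))
      = (\<lambda>x. (\<Sum>j\<in>B. x j) + c + eps * card (insert i I \<inter> B))"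
    using d_card by (simp add: add.assoc)
  finally show ?case
    by (simp only: card_insert_disjoint[OF insert.hyps] power_Suc mult.assoc)
qed simp

section \<open>Partial sums of independent exponential gaps\<close>

locale iid_exponential = prob_space M for M :: "'a measure" +
  fixes T :: "nat \<Rightarrow> 'a \<Rightarrow> real" and lam :: real
  assumes indep_T: "indep_vars (\<lambda>_. borel) T UNIV"
    and distributed_T: "\<And>i. distributed M lborel (T i) (exponential_density lam)"
    and lam_pos: "lam > 0"
begin

lemma measurable_T[measurable]: "T i \<in> borel_measurable M"
  using distributed_measurable[OF distributed_T[of i]] by simp

lemma measurable_poisson_points[measurable]: "(\<lambda>\<omega>. poisson_points T \<omega> k) \<in> borel_measurable M"
  unfolding poisson_points_def by measurable

lemma distr_T: "distr M borel (T i) = exponential_measure lam"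
proof -
  have "distr M borel (T i) = distr M lborel (T i)"
    by (rule distr_cong) simp_all
  then show ?thesis
    using distributed_distr_eq_density[OF distributed_T[of i]] by simp
qed

lemma distr_restrict_T:
  assumes "A \<noteq> {}"
  shows "distr M (PiM A (\<lambda>_. borel)) (\<lambda>\<omega>. \<lambda>i\<in>A. T i \<omega>) = PiM A (\<lambda>_. exponential_measure lam)"
proof -
  have "indep_vars (\<lambda>_. borel) T A"
    using indep_vars_subset[OF indep_T] by auto
  then have "distr M (PiM A (\<lambda>_. borel)) (\<lambda>\<omega>. \<lambda>i\<in>A. T i \<omega>) = PiM A (\<lambda>i. distr M borel (T i))"
    using indep_vars_iff_distr_eq_PiM[where M'="\<lambda>_. borel" and X=T, OF assms] by simp
  then show ?thesis
    by (simp add: distr_T)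
qed

lemma nn_integral_restrict_T:
  assumes "A \<noteq> {}" and F: "F \<in> borel_measurable (PiM A (\<lambda>_. exponential_measure lam))"
  shows "(\<integral>\<^sup>+\<omega>. F (\<lambda>i\<in>A. T i \<omega>) \<partial>M) = (\<integral>\<^sup>+x. F x \<partial>PiM A (\<lambda>_. exponential_measure lam))"
proof -
  have "borel_measurable (PiM A (\<lambda>_. exponential_measure lam)) = borel_measurable (PiM A (\<lambda>_. borel))"
    by (intro measurable_cong_sets sets_PiM_cong) auto
  then have "F \<in> borel_measurable (PiM A (\<lambda>_. borel))"
    using F by simp
  moreover have "(\<lambda>\<omega>. \<lambda>i\<in>A. T i \<omega>) \<in> measurable M (PiM A (\<lambda>_. borel))"
    by measurable
  ultimately show ?thesis
    using nn_integral_distr[of "\<lambda>\<omega>. \<lambda>i\<in>A. T i \<omega>" M "PiM A (\<lambda>_. borel)" F]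
    by (simp add: distr_restrict_T[OF assms(1)])
qed

lemma AE_T_pos: "AE \<omega> in M. \<forall>i. 0 < T i \<omega>"
proof (subst AE_all_countable, intro allI)
  fix i
  have "\<P>(\<omega> in M. 0 < T i \<omega>) = 1"
    using exponential_distributedD_gt[OF distributed_T order_refl] lam_pos by simp
  then show "AE \<omega> in M. 0 < T i \<omega>"
    by (intro AE_I_eq_1) (simp_all add: emeasure_eq_measure)
qed

lemma emeasure_poisson_points_le: "emeasure M {\<omega>\<in>space M. poisson_points T \<omega> k \<le> c} = erlang_CDF k lam c"
proof -
  have "distributed M lborel (\<lambda>\<omega>. poisson_points T \<omega> k) (erlang_density k lam)"
    using exponential_distributed_sum[of "{..k}" lam T] distributed_T indep_vars_subset[OF indep_T] lam_pos
    unfolding poisson_points_def by auto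
  moreover have "{\<omega>\<in>space M. poisson_points T \<omega> k \<le> c} = (\<lambda>\<omega>. poisson_points T \<omega> k) -` {..c} \<inter> space M"
    by auto
  ultimately have "emeasure M {\<omega>\<in>space M. poisson_points T \<omega> k \<le> c}
      = (\<integral>\<^sup>+x. ennreal (erlang_density k lam x) * indicator {..c} x \<partial>lborel)"
    using distributed_emeasure[of M lborel _ _ "{..c}"] by simp
  then show ?thesis
    by (simp add: nn_integral_erlang_density[OF lam_pos])
qed

lemma nn_integral_PiM_exponential_sum_le:
  assumes "{..k} \<subseteq> A"
  shows "(\<integral>\<^sup>+x. indicator {..c} ((\<Sum>j\<le>k. x j) + a) \<partial>PiM A (\<lambda>_. exponential_measure lam))
    = erlang_CDF k lam (c - a)"
proof -
  have "(\<lambda>x. indicator {..c} ((\<Sum>j\<le>k. x j) + a) :: ennreal)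
      \<in> borel_measurable (PiM A (\<lambda>_. exponential_measure lam))"
    using measurable_prod_indicator_sum_exponential[where I="{}" and B="{..k}" and h="indicator {..c}"] assms
    by simp
  then have "(\<integral>\<^sup>+x. indicator {..c} ((\<Sum>j\<le>k. x j) + a) \<partial>PiM A (\<lambda>_. exponential_measure lam))
      = (\<integral>\<^sup>+\<omega>. indicator {..c} ((\<Sum>j\<le>k. (\<lambda>i\<in>A. T i \<omega>) j) + a) \<partial>M)"
    using assms by (intro nn_integral_restrict_T[where F="\<lambda>x. indicator {..c} ((\<Sum>j\<le>k. x j) + a)", symmetric]) auto
  also have "\<dots> = (\<integral>\<^sup>+\<omega>. indicator {..c} ((\<Sum>j\<le>k. T j \<omega>) + a) \<partial>M)"
  proof -
    have "(\<Sum>j\<le>k. (\<lambda>i\<in>A. T i \<omega>) j) = (\<Sum>j\<le>k. T j \<omega>)" for \<omega>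
      using assms by (intro sum.cong) auto
    then show ?thesis
      by (simp only:)
  qed
  also have "\<dots> = (\<integral>\<^sup>+\<omega>. indicator {\<omega>\<in>space M. poisson_points T \<omega> k \<le> c - a} \<omega> \<partial>M)"
    by (intro nn_integral_cong) (simp add: poisson_points_def indicator_def algebra_simps)
  also have "\<dots> = erlang_CDF k lam (c - a)"
    by (simp add: emeasure_poisson_points_le)
  finally show ?thesis .
qed

text \<open>The gaps after the points \<open>j \<in> J\<close> all lie before the \<open>k\<close>-th point, so conditioning
  on each of them exceeding \<open>eps\<close> costs a factor \<open>exp (- lam * eps)\<close> and shifts the \<open>k\<close>-th
  point by \<open>eps\<close>; the gap after the \<open>k\<close>-th point only costs the factor.\<close>
lemma emeasure_poisson_points_le_gaps_gt:
  assumes eps: "eps \<ge> 0" and J: "J \<subseteq> {..<k}"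
  shows "emeasure M {\<omega>\<in>space M. poisson_points T \<omega> k \<le> c \<and> (\<forall>j\<in>insert k J. eps < T (Suc j) \<omega>)}
    = ennreal (exp (- lam * eps)) ^ Suc (card J) * erlang_CDF k lam (c - eps * card J)"
proof -
  define A where "A = {..Suc k}"
  define I where "I = Suc ` insert k J"
  let ?P = "PiM A (\<lambda>_. exponential_measure lam)"
  let ?F = "\<lambda>x. (\<Prod>j\<in>I. indicator {eps<..} (x j)) * indicator {..c} ((\<Sum>j\<le>k. x j) + 0) :: ennreal"
  let ?ev = "{\<omega>\<in>space M. poisson_points T \<omega> k \<le> c \<and> (\<forall>j\<in>insert k J. eps < T (Suc j) \<omega>)}"
  have "finite J"
    using J by (rule finite_subset) simp
  have "k \<notin> J" and J_less: "\<And>j. j \<in> J \<Longrightarrow> Suc j \<le> k"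
    using J by (auto simp: Suc_le_eq)
  have I: "I \<subseteq> A" "card I = Suc (card J)" "I \<inter> {..k} = Suc ` J"
    using \<open>k \<notin> J\<close> \<open>finite J\<close> J_less unfolding I_def A_def
    by (auto simp: card_insert_disjoint card_image image_iff dest: J_less)
  have "emeasure M ?ev = (\<integral>\<^sup>+\<omega>. ?F (\<lambda>i\<in>A. T i \<omega>) \<partial>M)"
  proof -
    have "(\<Prod>j\<in>I. indicator {eps<..} (if j \<in> A then T j \<omega> else undefined) :: ennreal)
        = of_bool (\<forall>j\<in>insert k J. eps < T (Suc j) \<omega>)" for \<omega>
      using I(1) \<open>finite J\<close> unfolding I_def
      by (simp add: indicator_def prod_of_bool subset_iff cong: prod.cong)
    then have "indicator ?ev \<omega> = ?F (\<lambda>i\<in>A. T i \<omega>)" if "\<omega> \<in> space M" for \<omega>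
      using that unfolding A_def poisson_points_def by (auto simp: indicator_def)
    then show ?thesis
      using \<open>finite J\<close> by (simp add: nn_integral_indicator[symmetric] cong: nn_integral_cong)
  qed
  also have "\<dots> = (\<integral>\<^sup>+x. ?F x \<partial>?P)"
    using I(1) unfolding A_def
    by (intro nn_integral_restrict_T measurable_prod_indicator_sum_exponential) auto
  also have "\<dots> = ennreal (exp (- lam * eps)) ^ card I
      * (\<integral>\<^sup>+x. indicator {..c} ((\<Sum>j\<le>k. x j) + 0 + eps * card (I \<inter> {..k})) \<partial>?P)"
    using I(1) by (intro nn_integral_PiM_exponential_tails lam_pos eps) (auto simp: A_def)
  also have "\<dots> = ennreal (exp (- lam * eps)) ^ Suc (card J) * erlang_CDF k lam (c - eps * card J)"
    using I(2,3) nn_integral_PiM_exponential_sum_le[of k A c "eps * card J"]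
    by (simp add: A_def card_image)
  finally show ?thesis .
qed

end

section \<open>Binomial moments of the number of clusters\<close>

locale poisson_clusters = iid_exponential +
  fixes eps L :: real
  assumes eps_pos: "eps > 0" and L_pos: "L > 0"
begin

definition cluster_ends :: "'a \<Rightarrow> nat set" where
  "cluster_ends \<omega> = {k. eps < T (Suc k) \<omega> \<and> poisson_points T \<omega> k + eps \<le> L}"

lemma beta0_poisson_points: "beta0 eps (poisson_points T \<omega>) L = card (cluster_ends \<omega>)"
  unfolding beta0_eq_card_cluster_ends cluster_ends_def by (simp add: poisson_points_def)

definition binomial_moment :: "nat \<Rightarrow> real" where
  "binomial_moment m = (if real m * eps \<le> L
     then ((L - real m * eps) * lam * exp (- lam * eps)) ^ m / fact m else 0)"

lemma binomial_moment_nonneg: "binomial_moment m \<ge> 0"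
  using lam_pos unfolding binomial_moment_def by auto

lemma sets_cluster_ends_superset:
  "finite J \<Longrightarrow> {\<omega>\<in>space M. J \<subseteq> cluster_ends \<omega>} \<in> sets M"
  unfolding cluster_ends_def subset_iff mem_Collect_eq by measurable

lemma emeasure_cluster_ends_superset:
  assumes J: "J \<subseteq> {..<k}"
  shows "emeasure M {\<omega>\<in>space M. insert k J \<subseteq> cluster_ends \<omega>}
    = ennreal (exp (- lam * eps)) ^ Suc (card J) * erlang_CDF k lam (L - eps - eps * card J)"
proof -
  have "finite J"
    using J by (rule finite_subset) simp
  have "emeasure M {\<omega>\<in>space M. insert k J \<subseteq> cluster_ends \<omega>}
      = emeasure M {\<omega>\<in>space M. poisson_points T \<omega> k \<le> L - eps \<and> (\<forall>j\<in>insert k J. eps < T (Suc j) \<omega>)}"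
  proof (rule emeasure_eq_AE)
    show "AE \<omega> in M. \<omega> \<in> {\<omega>\<in>space M. insert k J \<subseteq> cluster_ends \<omega>}
        \<longleftrightarrow> \<omega> \<in> {\<omega>\<in>space M. poisson_points T \<omega> k \<le> L - eps \<and> (\<forall>j\<in>insert k J. eps < T (Suc j) \<omega>)}"
      using AE_T_pos
    proof eventually_elim
      case (elim \<omega>)
      have mono: "poisson_points T \<omega> j \<le> poisson_points T \<omega> k" if "j \<in> J" for j
        using J that elim unfolding poisson_points_def by (intro sum_mono2) (auto simp: less_imp_le)
      show ?case
        unfolding cluster_ends_def by (fastforce simp: algebra_simps dest: mono)
    qed
  next
    show "{\<omega>\<in>space M. insert k J \<subseteq> cluster_ends \<omega>} \<in> sets M"
      using \<open>finite J\<close> by (intro sets_cluster_ends_superset) simp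
  qed (use \<open>finite J\<close> in measurable)
  also have "\<dots> = ennreal (exp (- lam * eps)) ^ Suc (card J) * erlang_CDF k lam (L - eps - eps * card J)"
    using eps_pos by (intro emeasure_poisson_points_le_gaps_gt J) simp
  finally show ?thesis .
qed

lemma indicator_cluster_ends_mult_choose:
  assumes "\<omega> \<in> space M"
  shows "indicator (cluster_ends \<omega>) k * of_nat (card (cluster_ends \<omega> \<inter> {..<k}) choose r)
    = (\<Sum>J | J \<subseteq> {..<k} \<and> card J = r. indicator {\<omega>\<in>space M. insert k J \<subseteq> cluster_ends \<omega>} \<omega> :: ennreal)"
proof -
  let ?C = "cluster_ends \<omega>" and ?S = "{J. J \<subseteq> {..<k} \<and> card J = r}"
  have "finite ?S"
    by (rule finite_subset[of _ "Pow {..<k}"]) auto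
  have "card (?C \<inter> {..<k}) choose r = card {J. J \<subseteq> ?C \<inter> {..<k} \<and> card J = r}"
    using n_subsets[of "?C \<inter> {..<k}" r] by simp
  also have "{J. J \<subseteq> ?C \<inter> {..<k} \<and> card J = r} = ?S \<inter> {J. J \<subseteq> ?C}"
    by auto
  finally have "of_nat (card (?C \<inter> {..<k}) choose r) = (\<Sum>J\<in>?S. of_bool (J \<subseteq> ?C) :: ennreal)"
    using \<open>finite ?S\<close> by simp
  then show ?thesis
    using assms by (cases "k \<in> ?C") (simp_all add: indicator_def)
qed

lemma measurable_indicator_cluster_ends_mult_choose:
  "(\<lambda>\<omega>. indicator (cluster_ends \<omega>) k * of_nat (card (cluster_ends \<omega> \<inter> {..<k}) choose r) :: ennreal)
    \<in> borel_measurable M"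
proof (subst measurable_cong[OF indicator_cluster_ends_mult_choose])
  have "finite J" if "J \<subseteq> {..<k}" for J
    using that by (rule finite_subset) simp
  then show "(\<lambda>\<omega>. \<Sum>J | J \<subseteq> {..<k} \<and> card J = r. indicator {\<omega>\<in>space M. insert k J \<subseteq> cluster_ends \<omega>} \<omega> :: ennreal)
      \<in> borel_measurable M"
    by (intro borel_measurable_sum borel_measurable_indicator sets_cluster_ends_superset) auto
qed

lemma nn_integral_indicator_cluster_ends_mult_choose:
  "(\<integral>\<^sup>+\<omega>. indicator (cluster_ends \<omega>) k * of_nat (card (cluster_ends \<omega> \<inter> {..<k}) choose r) \<partial>M)
    = ennreal (exp (- lam * eps)) ^ Suc r * (of_nat (k choose r) * ennreal (erlang_CDF k lam (L - eps - eps * r)))"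
proof -
  let ?S = "{J. J \<subseteq> {..<k} \<and> card J = r}"
  let ?E = "\<lambda>J. {\<omega>\<in>space M. insert k J \<subseteq> cluster_ends \<omega>}"
  have "finite J" if "J \<in> ?S" for J
    using that finite_subset by auto
  then have sets_E: "?E J \<in> sets M" if "J \<in> ?S" for J
    using that by (intro sets_cluster_ends_superset) simp
  have "(\<integral>\<^sup>+\<omega>. indicator (cluster_ends \<omega>) k * of_nat (card (cluster_ends \<omega> \<inter> {..<k}) choose r) \<partial>M)
      = (\<integral>\<^sup>+\<omega>. (\<Sum>J\<in>?S. indicator (?E J) \<omega>) \<partial>M)"
    by (intro nn_integral_cong indicator_cluster_ends_mult_choose)
  also have "\<dots> = (\<Sum>J\<in>?S. emeasure M (?E J))"
    using sets_E by (subst nn_integral_sum) auto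
  also have "\<dots> = (\<Sum>J\<in>?S. ennreal (exp (- lam * eps)) ^ Suc r * ennreal (erlang_CDF k lam (L - eps - eps * r)))"
    using emeasure_cluster_ends_superset by (intro sum.cong) auto
  also have "\<dots> = ennreal (exp (- lam * eps)) ^ Suc r * (of_nat (k choose r) * ennreal (erlang_CDF k lam (L - eps - eps * r)))"
    by (simp add: n_subsets mult_ac)
  finally show ?thesis .
qed

lemma ennreal_binomial_moment_Suc:
  "ennreal (exp (- lam * eps)) ^ Suc r
      * ennreal (if L - eps - eps * r \<ge> 0 then (lam * (L - eps - eps * r)) ^ Suc r / fact (Suc r) else 0)
    = ennreal (binomial_moment (Suc r))"
proof (cases "L - eps - eps * r \<ge> 0")
  case True
  have "L - real (Suc r) * eps = L - eps - eps * r" "real (Suc r) * eps \<le> L"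
    using True by (simp_all add: algebra_simps)
  then have "binomial_moment (Suc r)
      = exp (- lam * eps) ^ Suc r * ((lam * (L - eps - eps * r)) ^ Suc r / fact (Suc r))"
    unfolding binomial_moment_def by (simp only: if_True power_mult_distrib) (simp add: mult_ac)
  then show ?thesis
    by (simp only: ennreal_mult'[OF zero_le_power[OF exp_ge_zero]] ennreal_power[OF exp_ge_zero] if_P[OF True])
next
  case False
  then show ?thesis
    unfolding binomial_moment_def by (simp add: algebra_simps)
qed

lemma nn_integral_sum_cluster_ends_choose:
  "(\<integral>\<^sup>+\<omega>. (\<Sum>k. indicator (cluster_ends \<omega>) k * of_nat (card (cluster_ends \<omega> \<inter> {..<k}) choose r)) \<partial>M)
    = ennreal (binomial_moment (Suc r))"
proof -
  have "(\<integral>\<^sup>+\<omega>. (\<Sum>k. indicator (cluster_ends \<omega>) k * of_nat (card (cluster_ends \<omega> \<inter> {..<k}) choose r)) \<partial>M)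
      = (\<Sum>k. \<integral>\<^sup>+\<omega>. indicator (cluster_ends \<omega>) k * of_nat (card (cluster_ends \<omega> \<inter> {..<k}) choose r) \<partial>M)"
    by (intro nn_integral_suminf measurable_indicator_cluster_ends_mult_choose)
  also have "\<dots> = ennreal (exp (- lam * eps)) ^ Suc r
      * (\<Sum>k. of_nat (k choose r) * ennreal (erlang_CDF k lam (L - eps - eps * r)))"
    by (simp add: nn_integral_indicator_cluster_ends_mult_choose ennreal_suminf_cmult)
  also have "\<dots> = ennreal (binomial_moment (Suc r))"
    by (simp only: suminf_choose_erlang_CDF[OF lam_pos] ennreal_binomial_moment_Suc)
  finally show ?thesis .
qed

lemma measurable_count_cluster_ends:
  "(\<lambda>\<omega>. emeasure (count_space UNIV) (cluster_ends \<omega>)) \<in> borel_measurable M"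
proof -
  have "(\<lambda>\<omega>. \<Sum>k. indicator (cluster_ends \<omega>) k :: ennreal) \<in> borel_measurable M"
    unfolding cluster_ends_def indicator_def mem_Collect_eq by measurable
  then show ?thesis
    by (simp add: suminf_indicator_eq_emeasure_count_space)
qed

lemma AE_finite_cluster_ends: "AE \<omega> in M. finite (cluster_ends \<omega>)"
proof -
  have "(\<integral>\<^sup>+\<omega>. emeasure (count_space UNIV) (cluster_ends \<omega>) \<partial>M) = ennreal (binomial_moment 1)"
    using nn_integral_sum_cluster_ends_choose[of 0] by (simp add: suminf_indicator_eq_emeasure_count_space)
  then have "AE \<omega> in M. emeasure (count_space UNIV) (cluster_ends \<omega>) \<noteq> \<infinity>"
    by (intro nn_integral_PInf_AE measurable_count_cluster_ends) simp
  then show ?thesis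
    by eventually_elim (auto simp: emeasure_count_space split: if_splits)
qed

lemma measurable_card_cluster_ends[measurable]:
  "(\<lambda>\<omega>. card (cluster_ends \<omega>)) \<in> measurable M (count_space UNIV)"
proof (subst measurable_count_space_eq2_countable, intro conjI ballI)
  fix n :: nat
  let ?G = "\<lambda>\<omega>. emeasure (count_space UNIV) (cluster_ends \<omega>)"
  \<comment> \<open>\<open>card\<close> of an infinite set is \<open>0\<close>, hence the extra preimage for \<open>n = 0\<close>\<close>
  have "(\<lambda>\<omega>. card (cluster_ends \<omega>)) -` {n} \<inter> space M
      = ?G -` {of_nat n} \<inter> space M \<union> (if n = 0 then ?G -` {\<infinity>} \<inter> space M else {})"
    by (auto simp: emeasure_count_space card_gt_0_iff split: if_splits)
  also have "\<dots> \<in> sets M"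
    using measurable_sets[OF measurable_count_cluster_ends] by auto
  finally show "(\<lambda>\<omega>. card (cluster_ends \<omega>)) -` {n} \<inter> space M \<in> sets M" .
qed simp

lemma nn_integral_card_cluster_ends_choose:
  "(\<integral>\<^sup>+\<omega>. of_nat (card (cluster_ends \<omega>) choose m) \<partial>M) = ennreal (binomial_moment m)"
proof (cases m)
  case 0
  then show ?thesis
    using L_pos by (simp add: binomial_moment_def emeasure_space_1)
next
  case (Suc r)
  have "(\<integral>\<^sup>+\<omega>. of_nat (card (cluster_ends \<omega>) choose Suc r) \<partial>M)
      = (\<integral>\<^sup>+\<omega>. (\<Sum>k. indicator (cluster_ends \<omega>) k * of_nat (card (cluster_ends \<omega> \<inter> {..<k}) choose r)) \<partial>M)"
  proof (rule nn_integral_cong_AE)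
    show "AE \<omega> in M. (of_nat (card (cluster_ends \<omega>) choose Suc r) :: ennreal)
        = (\<Sum>k. indicator (cluster_ends \<omega>) k * of_nat (card (cluster_ends \<omega> \<inter> {..<k}) choose r))"
      using AE_finite_cluster_ends
      by eventually_elim (erule suminf_indicator_mult_card_Int_lessThan_choose[symmetric])
  qed
  then show ?thesis
    using Suc by (simp add: nn_integral_sum_cluster_ends_choose)
qed

lemma AE_card_cluster_ends_le: "AE \<omega> in M. card (cluster_ends \<omega>) \<le> nat \<lfloor>L / eps\<rfloor>"
proof -
  let ?B = "nat \<lfloor>L / eps\<rfloor>"
  have "binomial_moment (Suc ?B) = 0"
    using mult_le_iff_le_nat_floor_divide[OF eps_pos, of L "Suc ?B"] L_pos
    unfolding binomial_moment_def by auto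
  then have "(\<integral>\<^sup>+\<omega>. of_nat (card (cluster_ends \<omega>) choose Suc ?B) \<partial>M) = 0"
    by (simp add: nn_integral_card_cluster_ends_choose)
  then have "AE \<omega> in M. (of_nat (card (cluster_ends \<omega>) choose Suc ?B) :: ennreal) = 0"
    by (subst (asm) nn_integral_0_iff_AE) measurable
  then show ?thesis
    by eventually_elim (simp add: binomial_eq_0_iff)
qed

lemma
  shows integrable_card_cluster_ends_choose: "integrable M (\<lambda>\<omega>. real (card (cluster_ends \<omega>) choose m))"
    and integral_card_cluster_ends_choose:
      "(\<integral>\<omega>. real (card (cluster_ends \<omega>) choose m) \<partial>M) = binomial_moment m"
proof -
  have nn: "(\<integral>\<^sup>+\<omega>. ennreal (real (card (cluster_ends \<omega>) choose m)) \<partial>M) = ennreal (binomial_moment m)"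
    using nn_integral_card_cluster_ends_choose by (simp add: ennreal_of_nat_eq_real_of_nat)
  then show "integrable M (\<lambda>\<omega>. real (card (cluster_ends \<omega>) choose m))"
    by (intro integrableI_bounded) simp_all
  have "(\<integral>\<omega>. real (card (cluster_ends \<omega>) choose m) \<partial>M)
      = enn2real (\<integral>\<^sup>+\<omega>. ennreal (real (card (cluster_ends \<omega>) choose m)) \<partial>M)"
    by (intro integral_eq_nn_integral) simp_all
  then show "(\<integral>\<omega>. real (card (cluster_ends \<omega>) choose m) \<partial>M) = binomial_moment m"
    using nn binomial_moment_nonneg by simp
qed

text \<open>Binomial inversion of the moments, which is legitimate because \<open>card (cluster_ends \<omega>)\<close>
  is almost surely bounded.\<close>
lemma prob_card_cluster_ends:
  "measure M {\<omega>\<in>space M. card (cluster_ends \<omega>) = n}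
    = (\<Sum>i | n + i \<le> nat \<lfloor>L / eps\<rfloor>. (-1) ^ i * real ((n + i) choose n) * binomial_moment (n + i))"
proof -
  let ?B = "nat \<lfloor>L / eps\<rfloor>"
  have "measure M {\<omega>\<in>space M. card (cluster_ends \<omega>) = n}
      = (\<integral>\<omega>. indicator {\<omega>\<in>space M. card (cluster_ends \<omega>) = n} \<omega> \<partial>M)"
    by (simp add: emeasure_eq_measure)
  also have "\<dots> = (\<integral>\<omega>. (\<Sum>i | n + i \<le> ?B.
      (-1) ^ i * real ((n + i) choose n) * real (card (cluster_ends \<omega>) choose (n + i))) \<partial>M)"
  proof (rule integral_cong_AE)
    show "AE \<omega> in M. indicator {\<omega>\<in>space M. card (cluster_ends \<omega>) = n} \<omega>
        = (\<Sum>i | n + i \<le> ?B. (-1) ^ i * real ((n + i) choose n) * real (card (cluster_ends \<omega>) choose (n + i)))"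
      using AE_card_cluster_ends_le AE_space
      by eventually_elim (simp add: binomial_inversion indicator_def)
  qed measurable
  also have "\<dots> = (\<Sum>i | n + i \<le> ?B. (-1) ^ i * real ((n + i) choose n) * binomial_moment (n + i))"
    by (simp add: integrable_card_cluster_ends_choose integral_card_cluster_ends_choose)
  finally show ?thesis .
qed

lemma choose_mult_binomial_moment:
  assumes "n + i \<le> nat \<lfloor>L / eps\<rfloor>"
  shows "real ((n + i) choose n) * binomial_moment (n + i)
    = ((L - real (n + i) * eps) * lam * exp (- lam * eps)) ^ (n + i) / (fact n * fact i)"
proof -
  have "real (n + i) * eps \<le> L"
    using mult_le_iff_le_nat_floor_divide[OF eps_pos less_imp_le[OF L_pos]] assms by blast
  moreover have "real ((n + i) choose n) = fact (n + i) / (fact n * fact i)"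
    by (simp add: binomial_fact)
  ultimately show ?thesis
    unfolding binomial_moment_def by simp
qed

end

theorem theorem3:
  fixes M :: "'a measure" and T :: "nat \<Rightarrow> 'a \<Rightarrow> real"
    and lam \<epsilon> L :: real and n :: nat
  assumes "prob_space M"
    and "prob_space.indep_vars M (\<lambda>_. borel) T UNIV"
    and "\<And>i. distributed M lborel (T i) (exponential_density lam)"
    and "lam > 0" and "\<epsilon> > 0" and "L > 0"
  shows "measure M {\<omega> \<in> space M. beta0 \<epsilon> (poisson_points T \<omega>) L = n}
    = 1 / fact n *
      (\<Sum>i\<in>{i::nat. n + i \<le> nat \<lfloor>L / \<epsilon>\<rfloor>}.
         (-1) ^ i / fact i * ((L - real (n + i) * \<epsilon>) * lam * exp (- lam * \<epsilon>)) ^ (n + i))"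
proof -
  interpret poisson_clusters M T lam \<epsilon> L
    using assms unfolding poisson_clusters_def poisson_clusters_axioms_def
      iid_exponential_def iid_exponential_axioms_def by auto
  have "measure M {\<omega> \<in> space M. beta0 \<epsilon> (poisson_points T \<omega>) L = n}
      = (\<Sum>i | n + i \<le> nat \<lfloor>L / \<epsilon>\<rfloor>. (-1) ^ i * real ((n + i) choose n) * binomial_moment (n + i))"
    by (simp add: beta0_poisson_points prob_card_cluster_ends)
  also have "\<dots> = (\<Sum>i | n + i \<le> nat \<lfloor>L / \<epsilon>\<rfloor>. 1 / fact n *
      ((-1) ^ i / fact i * ((L - real (n + i) * \<epsilon>) * lam * exp (- lam * \<epsilon>)) ^ (n + i)))"
    by (intro sum.cong refl) (simp add: mult.assoc choose_mult_binomial_moment)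
  also have "\<dots> = 1 / fact n * (\<Sum>i | n + i \<le> nat \<lfloor>L / \<epsilon>\<rfloor>.
      (-1) ^ i / fact i * ((L - real (n + i) * \<epsilon>) * lam * exp (- lam * \<epsilon>)) ^ (n + i))"
    by (simp add: sum_distrib_left)
  finally show ?thesis .
qed

end
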